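(* Let $r\ge 3$. There exists an uncountable set of $r$-tuples $(\alpha_1,\dots,\alpha_r)\in\mathbb{R}^r$, each such that $1,\alpha_1,\dots,\alpha_r$ are linearly independent over $\mathbb{Q}$, such that for each of them there is $\nu_0$ with $\Delta_\nu^r=0$ for all $\nu>\nu_0$, where $\Delta_\nu^r$ is the determinant of the $(r+1)\times(r+1)$ integer matrix whose rows are the consecutive best approximations $m_\nu,m_{\nu+1},\dots,m_{\nu+r}$ (in the sense of linear form) for $(\alpha_1,\dots,\alpha_r)$.
   Context: For real $\alpha_1,\dots,\alpha_r$ and $m=(m_0,\dots,m_r)\in\mathbb{Z}^{r+1}\setminus\{0\}$ put $\zeta(m)=|m_0+m_1\alpha_1+\dots+m_r\alpha_r|$ and $M=\max_{0\le j\le r}|m_j|$. A point $m\in\mathbb{Z}^{r+1}\setminus\{0\}$ is a best approximation (in the sense of linear form) if $\zeta(m)=\min\{\zeta(n): n\in\mathbb{Z}^{r+1}\setminus\{0\},\ \max_j|n_j|\le M\}$. The best approximations are ordered as $m_1,m_2,\dots$ so that $\zeta(m_1)>\zeta(m_2)>\dots$ and $M_1<M_2<\dots$, where $M_\nu=\max_j|m_{j,\nu}|$. *)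

theory Defs
  imports "HOL-Library.Countable_Set" "Jordan_Normal_Form.Determinant" Complex_Main
begin

text \<open>An r-tuple (alpha_1,...,alpha_r) is a real list a of length r, alpha_j = a ! (j-1).
  An integer point m = (m_0,...,m_r) is an int list of length r+1, m_j = m ! j.\<close>

definition lin_indep_1 :: "real list \<Rightarrow> bool" where
  "lin_indep_1 a \<longleftrightarrow>
     (\<forall>q :: rat list. length q = length a + 1 \<longrightarrow>
        of_rat (q ! 0) + (\<Sum>j = 1..length a. of_rat (q ! j) * a ! (j - 1)) = 0 \<longrightarrow>
        (\<forall>j \<le> length a. q ! j = 0))"

definition zeta :: "real list \<Rightarrow> int list \<Rightarrow> real" where
  "zeta a m = \<bar>of_int (m ! 0) + (\<Sum>j = 1..length a. of_int (m ! j) * a ! (j - 1))\<bar>"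

definition height :: "int list \<Rightarrow> int" where
  "height m = Max (set (map abs m))"

definition admissible :: "real list \<Rightarrow> int list \<Rightarrow> bool" where
  "admissible a m \<longleftrightarrow> length m = length a + 1 \<and> m \<noteq> replicate (length a + 1) 0"

definition is_best_approx :: "real list \<Rightarrow> int list \<Rightarrow> bool" where
  "is_best_approx a m \<longleftrightarrow> admissible a m \<and>
     (\<forall>n. admissible a n \<and> height n \<le> height m \<longrightarrow> zeta a m \<le> zeta a n)"

definition best_approx_seq :: "real list \<Rightarrow> (nat \<Rightarrow> int list) \<Rightarrow> bool" where
  "best_approx_seq a ms \<longleftrightarrow>
     (\<forall>\<nu>\<ge>1. is_best_approx a (ms \<nu>)) \<and>
     (\<forall>\<nu>\<ge>1. zeta a (ms (\<nu> + 1)) < zeta a (ms \<nu>)) \<and>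
     (\<forall>m. is_best_approx a m \<longrightarrow> (\<exists>\<nu>\<ge>1. m = ms \<nu> \<or> m = map uminus (ms \<nu>)))"

definition Delta :: "nat \<Rightarrow> (nat \<Rightarrow> int list) \<Rightarrow> nat \<Rightarrow> int" where
  "Delta r ms \<nu> = det (mat (r + 1) (r + 1) (\<lambda>(i, j). ms (\<nu> + i) ! j))"

end

theory Submission
  imports Defs "HOL-Analysis.Kronecker_Approximation_Theorem"
begin

(* For a digit sequence epsilon put K_0 = 1, K_(k+1) = 8 (r+1) K_k^r, and let alpha_j collect
   the following terms over the levels k >= 1: e_k / K_k in alpha_1 for even k and in alpha_2 for
   odd k, where e_k = 1 + [epsilon (k-1)] is 1 or 2, and K_k^(j-2-r) in alpha_j for j >= 3.
   If all |m_j| < K_n, truncating the series after level n splits K_n^(r-1) (m_0 + sum m_j alpha_j)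
   into an integer, congruent modulo K_n^(r-2) to the base-K_n number with digits m_3, ..., m_r,
   and a tail of absolute value below 1/2. So either |m_0 + sum m_j alpha_j| > 1/(2 K_n^(r-1)), or
   m_3 = ... = m_r = 0. Since alpha_1 or alpha_2 has no term at level n, a point of height K_(n-1)
   already beats this bound; hence every best approximation of height in [K_(n-1), K_n) lies in the
   sublattice m_3 = ... = m_r = 0, eventually r+1 consecutive ones share a zero column, and Delta
   vanishes. The same dichotomy and the alternation of the terms of alpha_1 and alpha_2 give linear
   independence, and different epsilon give different tuples. Every independent tuple has an
   enumeration of its best approximations by Dirichlet's approximation theorem. *)

section \<open>Best approximations of independent tuples\<close>

definition lform :: "real list \<Rightarrow> int list \<Rightarrow> real" where
  "lform a m = of_int (m ! 0) + (\<Sum>j = 1..length a. of_int (m ! j) * a ! (j - 1))"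

lemma zeta_eq_abs_lform: "zeta a m = \<bar>lform a m\<bar>"
  unfolding zeta_def lform_def ..

lemma lform_map2_add:
  assumes "length m = length a + 1" "length n = length a + 1"
  shows "lform a (map2 (+) m n) = lform a m + lform a n"
  using assms unfolding lform_def by (simp add: sum.distrib algebra_simps)

lemma lform_map2_diff:
  assumes "length m = length a + 1" "length n = length a + 1"
  shows "lform a (map2 (-) m n) = lform a m - lform a n"
  using assms unfolding lform_def by (simp add: sum_subtractf algebra_simps)

lemma height_nth_le: "i < length m \<Longrightarrow> \<bar>m ! i\<bar> \<le> height m"
  unfolding height_def by (intro Max_ge) auto

lemma height_le_iff:
  assumes "m \<noteq> []"
  shows "height m \<le> B \<longleftrightarrow> (\<forall>i < length m. \<bar>m ! i\<bar> \<le> B)"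
  using assms unfolding height_def by (auto simp: in_set_conv_nth intro: nth_mem)

lemma height_map_uminus [simp]: "height (map uminus m) = height m"
  unfolding height_def by (simp add: comp_def)

lemma finite_height_le: "finite {m :: int list. length m = N \<and> height m \<le> B}"
proof (rule finite_subset)
  show "{m. length m = N \<and> height m \<le> B} \<subseteq> {m. set m \<subseteq> {-B..B} \<and> length m = N}"
    by (force simp: in_set_conv_nth abs_le_iff dest: height_nth_le)
qed (rule finite_lists_length_eq, simp)

lemma common_denominator_rat:
  assumes "finite A"
  shows "\<exists>d :: int. d > 0 \<and> (\<forall>x \<in> A. of_int d * x \<in> (\<int> :: rat set))"
proof (intro exI conjI ballI)
  define d where "d = (\<Prod>x\<in>A. snd (quotient_of x))"
  show "d > 0" unfolding d_def by (intro prod_pos) (simp add: quotient_of_denom_pos')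
  fix x assume "x \<in> A"
  then obtain k where k: "d = snd (quotient_of x) * k"
    unfolding d_def using assms by (meson dvd_prodI dvdE)
  have "of_int d * x = of_int (fst (quotient_of x) * k)"
    using quotient_of_div[of x "fst (quotient_of x)" "snd (quotient_of x)"]
      quotient_of_denom_pos'[of x] by (simp add: k field_simps)
  then show "of_int d * x \<in> \<int>" by simp
qed

lemma lform_eq_0_imp_zero:
  assumes indep: "lin_indep_1 a" and len: "length c = length a + 1" and zero: "lform a c = 0"
  shows "c = replicate (length a + 1) 0"
proof (rule nth_equalityI)
  show "length c = length (replicate (length a + 1) 0)" using len by simp
  fix j assume "j < length c"
  then have j: "j \<le> length a" using len by simp
  have "(\<Sum>i = 1..length a. of_rat (map of_int c ! i) * a ! (i - 1))
      = (\<Sum>i = 1..length a. of_int (c ! i) * a ! (i - 1))"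
    using len by (intro sum.cong) auto
  then have "of_rat (map of_int c ! 0) + (\<Sum>i = 1..length a. of_rat (map of_int c ! i) * a ! (i - 1)) = 0"
    using len zero unfolding lform_def by simp
  then have "map rat_of_int c ! j = 0"
    using indep[unfolded lin_indep_1_def, rule_format, of "map of_int c"] len j by simp
  then show "c ! j = replicate (length a + 1) 0 ! j" using len j by (simp del: replicate_Suc)
qed

lemma lin_indep_1I_int:
  assumes int: "\<And>c. length c = length a + 1 \<Longrightarrow> lform a c = 0 \<Longrightarrow> \<forall>j \<le> length a. c ! j = 0"
  shows "lin_indep_1 a"
  unfolding lin_indep_1_def
proof (intro allI impI)
  fix q :: "rat list" and j
  assume q: "length q = length a + 1"
    and eq: "of_rat (q ! 0) + (\<Sum>j = 1..length a. of_rat (q ! j) * a ! (j - 1)) = 0"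
    and j: "j \<le> length a"
  obtain d :: int where d: "d > 0" "\<forall>x \<in> set q. of_int d * x \<in> \<int>"
    using common_denominator_rat[of "set q"] by blast
  define c where "c = map (\<lambda>x. \<lfloor>of_int d * x\<rfloor>) q"
  have c_nth: "of_int (c ! i) = of_int d * q ! i" if "i \<le> length a" for i
  proof -
    have "of_int d * q ! i \<in> \<int>" using that q d(2) by simp
    then show ?thesis unfolding c_def using that q by (auto elim!: Ints_cases)
  qed
  have c_real: "real_of_int (c ! i) = of_int d * of_rat (q ! i)" if "i \<le> length a" for i
    using arg_cong[OF c_nth[OF that], of of_rat] by (simp add: of_rat_mult)
  have "lform a c = of_int d * (of_rat (q ! 0) + (\<Sum>j = 1..length a. of_rat (q ! j) * a ! (j - 1)))"
    unfolding lform_def distrib_left sum_distrib_left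
    by (intro arg_cong2[where f = "(+)"] sum.cong) (auto simp: c_real mult.assoc)
  moreover have "length c = length a + 1" using q unfolding c_def by simp
  ultimately have "c ! j = 0" using int j eq by simp
  then show "q ! j = 0" using c_nth[OF j] d(1) by simp
qed

lemma zeta_pos:
  assumes "lin_indep_1 a" "admissible a m"
  shows "0 < zeta a m"
proof -
  have "lform a m \<noteq> 0"
    using assms lform_eq_0_imp_zero[of a m] unfolding admissible_def by blast
  then show ?thesis unfolding zeta_eq_abs_lform by simp
qed

lemma zeta_eq_imp_eq_or_uminus:
  assumes indep: "lin_indep_1 a" and "admissible a m" "admissible a n"
    and zeta: "zeta a m = zeta a n"
  shows "m = n \<or> m = map uminus n"
proof -
  have len: "length m = length a + 1" "length n = length a + 1"
    using assms(2,3) unfolding admissible_def by auto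
  have "lform a m = lform a n \<or> lform a m = - lform a n"
    using zeta unfolding zeta_eq_abs_lform by linarith
  then show ?thesis
  proof
    assume "lform a m = lform a n"
    then have "map2 (-) m n = replicate (length a + 1) 0"
      using len by (intro lform_eq_0_imp_zero[OF indep]) (simp_all add: lform_map2_diff)
    then have "map2 (-) m n ! i = 0" if "i < length a + 1" for i
      using that by (simp del: replicate_Suc)
    then have "m ! i = n ! i" if "i < length a + 1" for i
      using that len by fastforce
    then show ?thesis using len by (simp add: nth_equalityI)
  next
    assume "lform a m = - lform a n"
    then have "map2 (+) m n = replicate (length a + 1) 0"
      using len by (intro lform_eq_0_imp_zero[OF indep]) (simp_all add: lform_map2_add)
    then have "map2 (+) m n ! i = 0" if "i < length a + 1" for i
      using that by (simp del: replicate_Suc)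
    then have "m ! i = - n ! i" if "i < length a + 1" for i
      using that len by fastforce
    then show ?thesis using len by (simp add: nth_equalityI)
  qed
qed

lemma is_best_approxD:
  "is_best_approx a m \<Longrightarrow> admissible a n \<Longrightarrow> height n \<le> height m \<Longrightarrow> zeta a m \<le> zeta a n"
  unfolding is_best_approx_def by blast

lemma best_approx_height_eq:
  assumes "lin_indep_1 a" "is_best_approx a m" "is_best_approx a n" "height m = height n"
  shows "m = n \<or> m = map uminus n"
  using assms by (intro zeta_eq_imp_eq_or_uminus antisym is_best_approxD)
    (auto simp: is_best_approx_def)

lemma best_approx_height_less_imp_zeta_less:
  assumes "lin_indep_1 a" "is_best_approx a m" "is_best_approx a n" "height m < height n"
  shows "zeta a n < zeta a m"
proof -
  have "zeta a n \<le> zeta a m"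
    using assms by (intro is_best_approxD) (auto simp: is_best_approx_def)
  moreover have "zeta a n \<noteq> zeta a m"
    using zeta_eq_imp_eq_or_uminus[of a n m] assms by (auto simp: is_best_approx_def)
  ultimately show ?thesis by simp
qed

lemma exists_best_approx_below:
  assumes "admissible a p"
  shows "\<exists>m. is_best_approx a m \<and> height m \<le> height p \<and> zeta a m \<le> zeta a p"
proof -
  define G where "G = {m. admissible a m \<and> height m \<le> height p}"
  have "G \<subseteq> {m. length m = length a + 1 \<and> height m \<le> height p}"
    unfolding G_def admissible_def by auto
  then have "finite G" using finite_height_le finite_subset by blast
  moreover have "p \<in> G" using assms unfolding G_def by simp
  ultimately obtain m where m: "is_arg_min (zeta a) (\<lambda>m. m \<in> G) m"
    using ex_is_arg_min_if_finite by blast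
  then have "is_best_approx a m"
    unfolding is_best_approx_def is_arg_min_linorder G_def by auto
  then show ?thesis using m \<open>p \<in> G\<close> unfolding is_arg_min_linorder G_def by auto
qed

lemma exists_admissible_zeta_less:
  assumes "a \<noteq> []" "\<delta> > 0"
  shows "\<exists>p. admissible a p \<and> zeta a p < \<delta>"
proof -
  obtain N :: nat where N: "1 / \<delta> < N" using reals_Archimedean2 by blast
  moreover have "0 < 1 / \<delta>" using assms(2) by simp
  ultimately have N_pos: "real N > 0" by linarith
  then have N_\<delta>: "1 / real N < \<delta>" using N assms(2) by (simp add: field_simps)
  obtain q p where q: "0 < q" and p: "\<bar>of_int q * a ! 0 - of_int (p 0)\<bar> < 1 / N"
    by (rule Dirichlet_approx_simult[where \<theta> = "\<lambda>_. a ! 0" and N = N and n = 1])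
      (use N_pos in auto)
  define v where "v = - p 0 # q # replicate (length a - 1) 0"
  have len: "length v = length a + 1" using assms(1) unfolding v_def by simp
  have "(\<Sum>j = 2..length a. of_int (v ! j) * a ! (j - 1)) = 0"
    unfolding v_def by (intro sum.neutral) (auto simp: nth_Cons')
  moreover have "{1..length a} = insert 1 {2..length a}" using assms(1) by (auto simp: Suc_le_eq)
  ultimately have "lform a v = of_int (v ! 0) + of_int (v ! 1) * a ! 0"
    unfolding lform_def by simp
  then have "lform a v = of_int q * a ! 0 - of_int (p 0)" by (simp add: v_def)
  moreover have "v \<noteq> replicate (length a + 1) 0"
  proof
    assume "v = replicate (length a + 1) 0"
    then have "v ! 1 = 0" using assms(1) by simp
    then show False using q by (simp add: v_def)
  qed
  ultimately show ?thesis using p N_\<delta> len unfolding admissible_def zeta_eq_abs_lform by auto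
qed

lemma exists_best_approx_height_ge:
  assumes indep: "lin_indep_1 a" and "a \<noteq> []"
  shows "\<exists>m. is_best_approx a m \<and> B \<le> height m"
proof -
  define F where "F = {m. admissible a m \<and> height m < B}"
  have "F \<subseteq> {m. length m = length a + 1 \<and> height m \<le> B}"
    unfolding F_def admissible_def by auto
  then have "finite F" using finite_height_le finite_subset by blast
  define \<mu> where "\<mu> = Min (insert 1 (zeta a ` F))"
  have "\<mu> > 0"
    unfolding \<mu>_def using \<open>finite F\<close> zeta_pos[OF indep] by (auto simp: F_def)
  then obtain p where p: "admissible a p" "zeta a p < \<mu>"
    using exists_admissible_zeta_less[OF assms(2)] by blast
  then obtain m where m: "is_best_approx a m" "zeta a m \<le> zeta a p"
    using exists_best_approx_below by blast
  have "m \<notin> F"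
  proof
    assume "m \<in> F"
    then have "\<mu> \<le> zeta a m" unfolding \<mu>_def using \<open>finite F\<close> by simp
    then show False using m p by simp
  qed
  then show ?thesis using m unfolding F_def is_best_approx_def by auto
qed

lemma exists_best_approx_seq:
  assumes indep: "lin_indep_1 a" and "a \<noteq> []"
  shows "\<exists>ms. best_approx_seq a ms"
proof -
  define H where "H = (\<lambda>m. nat (height m)) ` {m. is_best_approx a m}"
  have H: "infinite H" unfolding infinite_nat_iff_unbounded_le
  proof
    fix k
    obtain m where "is_best_approx a m" "int k \<le> height m"
      using exists_best_approx_height_ge[OF assms] by blast
    then show "\<exists>n\<ge>k. n \<in> H" unfolding H_def by (intro exI[of _ "nat (height m)"]) auto
  qed
  have height_nonneg: "0 \<le> height m" if "is_best_approx a m" for m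
    using that height_nth_le[of 0 m] unfolding is_best_approx_def admissible_def by auto
  define ms where "ms \<nu> = (SOME m. is_best_approx a m \<and> nat (height m) = enumerate H (\<nu> - 1))" for \<nu>
  have ms: "is_best_approx a (ms \<nu>) \<and> height (ms \<nu>) = int (enumerate H (\<nu> - 1))" for \<nu>
  proof -
    have "enumerate H (\<nu> - 1) \<in> H" using enumerate_in_set[OF H] .
    then have "\<exists>m. is_best_approx a m \<and> nat (height m) = enumerate H (\<nu> - 1)"
      unfolding H_def by force
    from someI_ex[OF this] show ?thesis using height_nonneg unfolding ms_def by force
  qed
  have "best_approx_seq a ms" unfolding best_approx_seq_def
  proof (intro conjI allI impI)
    show "is_best_approx a (ms \<nu>)" for \<nu> using ms by blast
    show "zeta a (ms (\<nu> + 1)) < zeta a (ms \<nu>)" if "1 \<le> \<nu>" for \<nu>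
      using ms[of \<nu>] ms[of "\<nu> + 1"] enumerate_step[OF H, of "\<nu> - 1"] that
      by (intro best_approx_height_less_imp_zeta_less[OF indep]) auto
    fix m assume m: "is_best_approx a m"
    then obtain s where "enumerate H s = nat (height m)"
      using enumerate_Ex[OF H] unfolding H_def by blast
    then have "height (ms (Suc s)) = height m" using ms height_nonneg[OF m] by simp
    then show "\<exists>\<nu>\<ge>1. m = ms \<nu> \<or> m = map uminus (ms \<nu>)"
      using best_approx_height_eq[OF indep m] ms by (intro exI[of _ "Suc s"]) auto
  qed
  then show ?thesis by blast
qed

lemma best_approx_seq_zeta_less:
  assumes "best_approx_seq a ms" "1 \<le> \<mu>" "\<mu> < \<nu>"
  shows "zeta a (ms \<nu>) < zeta a (ms \<mu>)"
  using assms(3)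
proof (induction \<nu>)
  case (Suc \<nu>)
  then have "zeta a (ms (Suc \<nu>)) < zeta a (ms \<nu>)"
    using assms(1,2) unfolding best_approx_seq_def by auto
  then show ?case using Suc by (cases "\<mu> = \<nu>") auto
qed simp

lemma best_approx_seq_height_eventually_ge:
  assumes "best_approx_seq a ms"
  shows "\<exists>\<nu>0. \<forall>\<nu>>\<nu>0. B \<le> height (ms \<nu>)"
proof -
  define A where "A = {\<nu>. 1 \<le> \<nu> \<and> height (ms \<nu>) < B}"
  have "inj_on ms A"
  proof (rule inj_onI)
    fix \<mu> \<nu> assume "\<mu> \<in> A" "\<nu> \<in> A" "ms \<mu> = ms \<nu>"
    then show "\<mu> = \<nu>" using best_approx_seq_zeta_less[OF assms, of \<mu> \<nu>]
        best_approx_seq_zeta_less[OF assms, of \<nu> \<mu>] unfolding A_def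
      by (cases \<mu> \<nu> rule: linorder_cases) auto
  qed
  moreover have "ms ` A \<subseteq> {m. length m = length a + 1 \<and> height m \<le> B}"
    using assms unfolding A_def best_approx_seq_def is_best_approx_def admissible_def by auto
  then have "finite (ms ` A)" using finite_height_le by (rule finite_subset)
  ultimately have "finite A" using finite_imageD by blast
  have "B \<le> height (ms \<nu>)" if "\<nu> > Max (insert 0 A)" for \<nu>
  proof -
    have "\<nu> \<notin> A" using that Max_ge[of "insert 0 A" \<nu>] \<open>finite A\<close> by auto
    then show ?thesis using that unfolding A_def by auto
  qed
  then show ?thesis by blast
qed

lemma Delta_eq_0_if_zero_column:
  assumes "k \<le> r" "\<And>i. i \<le> r \<Longrightarrow> ms (\<nu> + i) ! k = 0"
  shows "Delta r ms \<nu> = 0"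
proof -
  have "p k \<le> r" if "p permutes {0..<Suc r}" for p
    using assms(1) permutes_in_image[OF that, of k] by auto
  then show ?thesis unfolding Delta_def det_col[OF mat_carrier]
    using assms by (intro sum.neutral ballI)
      (auto intro!: prod_zero bexI[of _ k] simp del: prod.lessThan_Suc)
qed

section \<open>The lacunary scale\<close>

lemma zero_if_power_dvd_digit_sum:
  fixes K :: int and v :: "nat \<Rightarrow> int"
  assumes "2 \<le> K" "\<forall>i<R. \<bar>v i\<bar> < K" "K ^ R dvd (\<Sum>i<R. v i * K ^ i)"
  shows "\<forall>i<R. v i = 0"
  using assms(2,3)
proof (induction R arbitrary: v)
  case (Suc R)
  have sum: "(\<Sum>i<Suc R. v i * K ^ i) = v 0 + K * (\<Sum>i<R. v (Suc i) * K ^ i)"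
    unfolding sum.lessThan_Suc_shift by (simp add: sum_distrib_left mult.assoc mult.left_commute)
  have "K dvd K ^ Suc R" by simp
  then have "K dvd (\<Sum>i<Suc R. v i * K ^ i)" using Suc.prems(2) by (rule dvd_trans)
  then have "K dvd v 0" unfolding sum by (simp add: dvd_add_left_iff)
  moreover have "\<bar>v 0\<bar> < K" using Suc.prems(1) by simp
  ultimately have v0: "v 0 = 0" using dvd_imp_le_int[of "v 0" K] by linarith
  have "K * K ^ R dvd K * (\<Sum>i<R. v (Suc i) * K ^ i)"
    using Suc.prems(2) unfolding sum v0 by simp
  then have "K ^ R dvd (\<Sum>i<R. v (Suc i) * K ^ i)" using assms(1) by simp
  moreover have "\<forall>i<R. \<bar>v (Suc i)\<bar> < K" using Suc.prems(1) by simp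
  ultimately have "\<forall>i<R. v (Suc i) = 0" using Suc.IH[of "\<lambda>i. v (Suc i)"] by blast
  then show ?case using v0 unfolding All_less_Suc2 by simp
qed simp

fun Kseq :: "nat \<Rightarrow> nat \<Rightarrow> int" where
  "Kseq r 0 = 1"
| "Kseq r (Suc n) = 8 * (int r + 1) * Kseq r n ^ r"

lemma Kseq_pos: "1 \<le> Kseq r n"
proof (induction n)
  case (Suc n)
  then have "1 * 1 \<le> 8 * (int r + 1) * Kseq r n ^ r"
    by (intro mult_mono) (auto simp: one_le_power)
  then show ?case by simp
qed simp

lemma Kseq_Suc_ge: "1 \<le> r \<Longrightarrow> 8 * Kseq r n \<le> Kseq r (Suc n)"
proof -
  assume "1 \<le> r"
  then have "Kseq r n ^ 1 \<le> Kseq r n ^ r" using Kseq_pos by (intro power_increasing) auto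
  then have "8 * Kseq r n \<le> 8 * (int r + 1) * Kseq r n ^ r"
    using Kseq_pos[of r n] by (intro mult_mono) auto
  then show ?thesis by simp
qed

lemma Kseq_mono:
  assumes "1 \<le> r" "k \<le> n"
  shows "Kseq r k \<le> Kseq r n"
proof (rule lift_Suc_mono_le[OF _ assms(2)])
  show "Kseq r m \<le> Kseq r (Suc m)" for m
    using Kseq_Suc_ge[OF assms(1), of m] Kseq_pos[of r m] by linarith
qed

lemma Kseq_add_ge: "1 \<le> r \<Longrightarrow> 2 ^ i * Kseq r m \<le> Kseq r (i + m)"
proof (induction i)
  case (Suc i)
  then show ?case using Kseq_Suc_ge[of r "i + m"] Kseq_pos[of r "i + m"] by (simp del: Kseq.simps)
qed simp

lemma less_Kseq:
  assumes "1 \<le> r"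
  shows "int n < Kseq r n"
proof -
  have "int n < 2 ^ n" using less_exp[of n] by (metis of_nat_less_iff of_nat_numeral of_nat_power)
  also have "\<dots> \<le> Kseq r n" using Kseq_add_ge[OF assms, of n 0] by simp
  finally show ?thesis .
qed

lemma Kseq_dvd: "1 \<le> r \<Longrightarrow> k \<le> n \<Longrightarrow> Kseq r k dvd Kseq r n"
proof (induction n)
  case (Suc n)
  have "Kseq r n dvd Kseq r (Suc n)" using Suc.prems(1) by (simp add: dvd_power)
  then show ?case using Suc by (cases "k = Suc n") (auto intro: dvd_trans)
qed simp

lemma Kseq_pow_dvd:
  assumes "1 \<le> r" "k < n"
  shows "Kseq r k ^ (r - 1) dvd Kseq r n"
proof -
  obtain n' where n: "n = Suc n'" "k \<le> n'" using assms(2) by (cases n) auto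
  have "Kseq r k ^ (r - 1) dvd Kseq r n' ^ (r - 1)" using Kseq_dvd[OF assms(1) n(2)] by (rule dvd_power_same)
  also have "\<dots> dvd Kseq r n' ^ r" by (rule le_imp_power_dvd) simp
  also have "\<dots> dvd Kseq r n" unfolding n by simp
  finally show ?thesis .
qed

declare Kseq.simps(2) [simp del]

section \<open>The construction\<close>

locale lacunary_tuple =
  fixes r :: nat and \<epsilon> :: "nat \<Rightarrow> bool"
  assumes three_le_r: "3 \<le> r"
begin

lemma one_le_r: "1 \<le> r"
  using three_le_r by simp

abbreviation K :: "nat \<Rightarrow> real" where
  "K n \<equiv> of_int (Kseq r n)"

lemma K_ge_1: "1 \<le> K n"
  using Kseq_pos[of r n] by simp

lemma power_r_minus_1: "(x :: 'a :: monoid_mult) ^ (r - 1) = x ^ (r - 2) * x"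
proof -
  have "r - 1 = Suc (r - 2)" using three_le_r by simp
  then show ?thesis by (metis power_Suc2)
qed

lemma power_r: "(x :: 'a :: monoid_mult) ^ r = x ^ (r - 1) * x"
proof -
  have "r = Suc (r - 1)" using three_le_r by simp
  then show ?thesis by (metis power_Suc2)
qed

definition digit :: "nat \<Rightarrow> int" where
  "digit k = 1 + of_bool (\<epsilon> (k - 1))"

(* All level-k terms share the denominator K_k^(r-1), which divides K_n for k < n; this makes the
   truncations scaled by K_n^(r-1) integral. *)
definition numer :: "nat \<Rightarrow> nat \<Rightarrow> int" where
  "numer k j =
     (if j = 1 then (if even k then digit k * Kseq r k ^ (r - 2) else 0)
      else if j = 2 then (if odd k then digit k * Kseq r k ^ (r - 2) else 0)
      else Kseq r k ^ (j - 3))"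

definition summand :: "nat \<Rightarrow> nat \<Rightarrow> real" where
  "summand k j = (if k = 0 then 0 else of_int (numer k j) / K k ^ (r - 1))"

definition alpha :: "nat \<Rightarrow> real" where
  "alpha j = (\<Sum>k. summand k j)"

definition head :: "nat \<Rightarrow> nat \<Rightarrow> real" where
  "head n j = (\<Sum>k\<le>n. summand k j)"

definition tail :: "nat \<Rightarrow> nat \<Rightarrow> real" where
  "tail n j = alpha j - head n j"

definition alphas :: "real list" where
  "alphas = map alpha [1..<r + 1]"

lemma digit_ge_1: "1 \<le> digit k"
  unfolding digit_def by simp

lemma digit_le_2: "digit k \<le> 2"
  unfolding digit_def by simp

lemma summand_12:
  assumes "j = 1 \<or> j = 2" "1 \<le> k"
  shows "summand k j = (if j = 1 \<longleftrightarrow> even k then of_int (digit k) / K k else 0)"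
proof -
  have "of_int (digit k * Kseq r k ^ (r - 2)) / K k ^ (r - 1) = of_int (digit k) / K k"
    unfolding power_r_minus_1 using K_ge_1[of k] by simp
  then show ?thesis using assms unfolding summand_def numer_def by auto
qed

lemma summand_nonneg: "0 \<le> summand k j"
  unfolding summand_def numer_def using digit_ge_1[of k] Kseq_pos[of r k] by auto

lemma summand_le:
  assumes "j \<le> r"
  shows "summand k j \<le> 2 / K k"
proof -
  have "numer k j \<le> 2 * Kseq r k ^ (r - 2)"
  proof -
    have "Kseq r k ^ (j - 3) \<le> Kseq r k ^ (r - 2)"
      using assms Kseq_pos[of r k] by (intro power_increasing) auto
    moreover have "1 \<le> Kseq r k ^ (r - 2)" using Kseq_pos[of r k] by simp
    ultimately show ?thesis unfolding numer_def using digit_le_2[of k]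
      by (auto intro: mult_right_mono)
  qed
  then have "of_int (numer k j) \<le> 2 * K k ^ (r - 2)"
    by (metis of_int_le_iff of_int_mult of_int_numeral of_int_power)
  then have "of_int (numer k j) / K k ^ (r - 1) \<le> 2 * K k ^ (r - 2) / K k ^ (r - 1)"
    using K_ge_1[of k] by (intro divide_right_mono) auto
  also have "\<dots> = 2 / K k"
    unfolding power_r_minus_1 using K_ge_1[of k] by simp
  finally show ?thesis unfolding summand_def using K_ge_1[of k] by auto
qed

lemma summand_shift_le:
  assumes "j \<le> r"
  shows "summand (i + m) j \<le> 2 / K m * (1 / 2) ^ i"
proof -
  have "2 ^ i * K m \<le> K (i + m)"
    using Kseq_add_ge[OF one_le_r, of i m] by (metis of_int_le_iff of_int_mult of_int_numeral of_int_power)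
  then have "2 / K (i + m) \<le> 2 / (2 ^ i * K m)"
    using K_ge_1[of m] K_ge_1[of "i + m"] by (intro divide_left_mono) (auto intro!: mult_pos_pos)
  also have "\<dots> = 2 / K m * (1 / 2) ^ i" by (simp add: power_one_over)
  finally show ?thesis using summand_le[OF assms, of "i + m"] by linarith
qed

lemma summable_summand_shift:
  assumes "j \<le> r"
  shows "summable (\<lambda>i. summand (i + m) j)"
proof (rule summable_comparison_test'[where N = 0])
  show "summable (\<lambda>i. 2 / K m * (1 / 2 :: real) ^ i)"
    by (intro summable_mult summable_geometric) simp
  show "norm (summand (i + m) j) \<le> 2 / K m * (1 / 2) ^ i" for i
    using summand_shift_le[OF assms] summand_nonneg by simp
qed

lemma tail_eq_suminf: "j \<le> r \<Longrightarrow> tail n j = (\<Sum>i. summand (i + Suc n) j)"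
  unfolding tail_def alpha_def head_def
  using suminf_split_initial_segment[OF summable_summand_shift[of j 0], of "Suc n"]
  by (simp add: lessThan_Suc_atMost)

lemma tail_nonneg: "j \<le> r \<Longrightarrow> 0 \<le> tail n j"
  unfolding tail_eq_suminf by (intro suminf_nonneg summable_summand_shift summand_nonneg)

lemma tail_le:
  assumes "j \<le> r"
  shows "tail n j \<le> 4 / K (Suc n)"
proof -
  have "tail n j \<le> (\<Sum>i. 2 / K (Suc n) * (1 / 2) ^ i)"
    unfolding tail_eq_suminf[OF assms]
    by (intro suminf_le summand_shift_le summable_summand_shift assms
        summable_mult summable_geometric) simp
  also have "\<dots> = 2 / K (Suc n) * (\<Sum>i. (1 / 2) ^ i)"
    by (rule suminf_mult) (simp add: summable_geometric)
  also have "\<dots> = 4 / K (Suc n)" by (simp add: suminf_geometric)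
  finally show ?thesis .
qed

lemma tail_Suc: "tail n j = summand (Suc n) j + tail (Suc n) j"
  unfolding tail_def head_def by simp

lemma alpha_split: "alpha j = head i j + summand (Suc i) j + tail (Suc i) j"
  using tail_Suc[of i j] unfolding tail_def by simp

lemma alpha_lt_1:
  assumes "j \<le> r"
  shows "alpha j < 1"
proof -
  have "alpha j = tail 0 j" unfolding tail_def head_def summand_def by simp
  also have "\<dots> \<le> 4 / K 1" using tail_le[OF assms] by simp
  also have "\<dots> < 1" by (simp add: Kseq.simps)
  finally show ?thesis .
qed

lemma length_alphas [simp]: "length alphas = r"
  unfolding alphas_def by simp

lemma alphas_nth: "1 \<le> j \<Longrightarrow> j \<le> r \<Longrightarrow> alphas ! (j - 1) = alpha j"
  unfolding alphas_def by (simp del: upt_Suc)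

lemma alphas_ne_Nil: "alphas \<noteq> []"
  unfolding alphas_def using three_le_r by simp

lemma lform_alphas: "lform alphas m = of_int (m ! 0) + (\<Sum>j = 1..r. of_int (m ! j) * alpha j)"
  unfolding lform_def alphas_def
  by (intro arg_cong2[where f = "(+)"] sum.cong) (auto simp del: upt_Suc)

lemma K_Suc: "K (Suc n) = 8 * (real r + 1) * K n ^ r"
  by (simp add: Kseq.simps)

lemma K_Suc_bound: "real r * (K n * (4 / K (Suc n))) < 1 / (2 * K n ^ (r - 1))"
proof -
  have "real r * (K n * (4 / K (Suc n))) = real r * K n * 4 / (8 * (real r + 1) * (K n ^ (r - 1) * K n))"
    by (simp add: K_Suc power_r[of "K n"])
  also have "\<dots> = real r / (real r + 1) * (1 / (2 * K n ^ (r - 1)))"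
    using K_ge_1[of n] by (simp add: divide_simps)
  also have "\<dots> < 1 * (1 / (2 * K n ^ (r - 1)))"
    using K_ge_1[of n] by (intro mult_strict_right_mono) auto
  finally show ?thesis by simp
qed

lemma sum_1_to_r: "(\<Sum>j = 1..r. f j) = f 1 + f 2 + (\<Sum>j = 3..r. f j :: 'a :: comm_monoid_add)"
proof -
  have "{1..r} = insert 1 (insert 2 {3..r})" using three_le_r by auto
  then show ?thesis by (simp add: add.assoc)
qed

lemma scaled_summand_before:
  assumes "k < n"
  shows "\<exists>y. K n ^ (r - 1) * summand k j = of_int (Kseq r n ^ (r - 2) * y)"
proof (cases "k = 0")
  case False
  obtain w where w: "Kseq r n = Kseq r k ^ (r - 1) * w"
    using Kseq_pow_dvd[OF one_le_r assms] by blast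
  have "K n ^ (r - 1) * summand k j = K n ^ (r - 2) * (K n / K k ^ (r - 1)) * of_int (numer k j)"
    unfolding summand_def power_r_minus_1[of "K n"] using False by simp
  also have "K n / K k ^ (r - 1) = of_int w"
    unfolding w using K_ge_1[of k] by simp
  finally show ?thesis by (intro exI[of _ "w * numer k j"]) simp
qed (simp add: summand_def)

lemma scaled_head:
  assumes "1 \<le> n" "1 \<le> j"
  shows "\<exists>y. K n ^ (r - 1) * head n j
           = of_int (Kseq r n ^ (r - 2) * y + (if 3 \<le> j then Kseq r n ^ (j - 3) else 0))"
proof -
  have "\<forall>k\<in>{..<n}. \<exists>y. K n ^ (r - 1) * summand k j = of_int (Kseq r n ^ (r - 2) * y)"
    using scaled_summand_before by blast
  then obtain y where y: "\<forall>k\<in>{..<n}. K n ^ (r - 1) * summand k j = of_int (Kseq r n ^ (r - 2) * y k)"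
    by metis
  have "\<exists>z. numer n j = Kseq r n ^ (r - 2) * z + (if 3 \<le> j then Kseq r n ^ (j - 3) else 0)"
    unfolding numer_def using assms(2) by (auto intro: exI[of _ "digit n"] exI[of _ 0])
  then obtain z where z: "numer n j = Kseq r n ^ (r - 2) * z + (if 3 \<le> j then Kseq r n ^ (j - 3) else 0)"
    by blast
  have "K n ^ (r - 1) * summand n j = of_int (numer n j)"
    unfolding summand_def using assms(1) K_ge_1[of n] by simp
  moreover have "head n j = (\<Sum>k<n. summand k j) + summand n j"
    unfolding head_def lessThan_Suc_atMost[symmetric] by simp
  ultimately have "K n ^ (r - 1) * head n j
      = (\<Sum>k<n. of_int (Kseq r n ^ (r - 2) * y k)) + of_int (numer n j)"
    using y by (simp add: distrib_left sum_distrib_left)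
  also have "\<dots> = of_int (Kseq r n ^ (r - 2) * (sum y {..<n} + z)
                   + (if 3 \<le> j then Kseq r n ^ (j - 3) else 0))"
    unfolding z by (simp add: sum_distrib_left distrib_left)
  finally show ?thesis by blast
qed

lemma tail_sum_small:
  assumes "1 \<le> n" "\<forall>j\<le>r. \<bar>m ! j\<bar> < Kseq r n"
  shows "\<bar>\<Sum>j = 1..r. of_int (m ! j) * tail n j\<bar> < 1 / (2 * K n ^ (r - 1))"
proof -
  have "\<bar>\<Sum>j = 1..r. of_int (m ! j) * tail n j\<bar> \<le> (\<Sum>j = 1..r. K n * (4 / K (Suc n)))"
  proof (rule order_trans[OF sum_abs sum_mono])
    fix j assume j: "j \<in> {1..r}"
    have "\<bar>of_int (m ! j)\<bar> \<le> K n"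
      using assms(2) j by (metis atLeastAtMost_iff less_imp_le of_int_abs of_int_le_iff)
    then show "\<bar>of_int (m ! j) * tail n j\<bar> \<le> K n * (4 / K (Suc n))"
      using j tail_nonneg[of j n] tail_le[of j n] unfolding abs_mult
      by (intro mult_mono) auto
  qed
  also have "\<dots> < 1 / (2 * K n ^ (r - 1))" using K_Suc_bound by simp
  finally show ?thesis .
qed

lemma scaled_head_form:
  assumes "1 \<le> n"
  obtains I where "K n ^ (r - 1) * (of_int (m ! 0) + (\<Sum>j = 1..r. of_int (m ! j) * head n j)) = of_int I"
    and "Kseq r n ^ (r - 2) dvd I - (\<Sum>i<r - 2. m ! (i + 3) * Kseq r n ^ i)"
proof -
  define \<rho> where "\<rho> j = (if 3 \<le> j then Kseq r n ^ (j - 3) else 0)" for j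
  have "\<forall>j\<in>{1..r}. \<exists>y. K n ^ (r - 1) * head n j = of_int (Kseq r n ^ (r - 2) * y + \<rho> j)"
    using scaled_head[OF assms] unfolding \<rho>_def by auto
  then obtain y where y: "\<forall>j\<in>{1..r}. K n ^ (r - 1) * head n j = of_int (Kseq r n ^ (r - 2) * y j + \<rho> j)"
    by metis
  define I where "I = m ! 0 * Kseq r n ^ (r - 1) + (\<Sum>j = 1..r. m ! j * (Kseq r n ^ (r - 2) * y j + \<rho> j))"
  have "K n ^ (r - 1) * (of_int (m ! 0) + (\<Sum>j = 1..r. of_int (m ! j) * head n j))
      = of_int (m ! 0) * K n ^ (r - 1) + (\<Sum>j = 1..r. of_int (m ! j) * (K n ^ (r - 1) * head n j))"
    by (simp add: distrib_left sum_distrib_left ac_simps)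
  also have "\<dots> = of_int I"
    unfolding I_def using y by simp
  finally have scaled: "K n ^ (r - 1) * (of_int (m ! 0) + (\<Sum>j = 1..r. of_int (m ! j) * head n j))
      = of_int I" .
  have "(\<Sum>j = 1..r. m ! j * \<rho> j) = (\<Sum>i<r - 2. m ! (i + 3) * Kseq r n ^ i)"
  proof -
    have "(\<Sum>j = 1..r. m ! j * \<rho> j) = (\<Sum>j = 3..r. m ! j * Kseq r n ^ (j - 3))"
      unfolding sum_1_to_r by (simp add: \<rho>_def)
    also have "\<dots> = (\<Sum>i<r - 2. m ! (i + 3) * Kseq r n ^ i)"
      by (rule sum.reindex_bij_witness[of _ "\<lambda>i. i + 3" "\<lambda>j. j - 3"]) auto
    finally show ?thesis .
  qed
  moreover have "(\<Sum>j = 1..r. m ! j * (Kseq r n ^ (r - 2) * y j + \<rho> j))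
      = Kseq r n ^ (r - 2) * (\<Sum>j = 1..r. m ! j * y j) + (\<Sum>j = 1..r. m ! j * \<rho> j)"
    by (simp add: distrib_left sum.distrib sum_distrib_left mult.left_commute)
  ultimately have "I - (\<Sum>i<r - 2. m ! (i + 3) * Kseq r n ^ i)
      = Kseq r n ^ (r - 2) * (m ! 0 * Kseq r n + (\<Sum>j = 1..r. m ! j * y j))"
    unfolding I_def power_r_minus_1 by (simp add: distrib_left)
  then have "Kseq r n ^ (r - 2) dvd I - (\<Sum>i<r - 2. m ! (i + 3) * Kseq r n ^ i)" by simp
  with scaled show ?thesis by (rule that)
qed

lemma high_coords_zero:
  assumes n: "1 \<le> n" and m: "\<forall>j\<le>r. \<bar>m ! j\<bar> < Kseq r n"
    and dvd: "Kseq r n ^ (r - 2) dvd (\<Sum>i<r - 2. m ! (i + 3) * Kseq r n ^ i)"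
  shows "\<forall>j\<in>{3..r}. m ! j = 0"
proof
  have "2 \<le> Kseq r n"
    using Kseq_Suc_ge[OF one_le_r, of "n - 1"] Kseq_pos[of r "n - 1"] n by simp
  moreover have "\<forall>i<r - 2. \<bar>m ! (i + 3)\<bar> < Kseq r n" using m by simp
  ultimately have digits: "\<forall>i<r - 2. m ! (i + 3) = 0"
    using dvd by (rule zero_if_power_dvd_digit_sum)
  fix j assume "j \<in> {3..r}"
  then have "j - 3 < r - 2" "j = (j - 3) + 3" by auto
  then show "m ! j = 0" using digits by metis
qed

lemma lform_gap:
  assumes n: "1 \<le> n" and m: "\<forall>j\<le>r. \<bar>m ! j\<bar> < Kseq r n"
  shows "1 / (2 * K n ^ (r - 1)) < \<bar>lform alphas m\<bar> \<or>
         (\<forall>j\<in>{3..r}. m ! j = 0) \<and>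
         lform alphas m = of_int (m ! 1) * tail n 1 + of_int (m ! 2) * tail n 2"
proof -
  define X where "X = of_int (m ! 0) + (\<Sum>j = 1..r. of_int (m ! j) * head n j)"
  define T where "T = (\<Sum>j = 1..r. of_int (m ! j) * tail n j)"
  have lform: "lform alphas m = X + T"
    unfolding lform_alphas X_def T_def tail_def by (simp add: right_diff_distrib sum_subtractf)
  obtain I where I: "K n ^ (r - 1) * X = of_int I"
    and dvd: "Kseq r n ^ (r - 2) dvd I - (\<Sum>i<r - 2. m ! (i + 3) * Kseq r n ^ i)"
    using scaled_head_form[OF n] unfolding X_def by blast
  have T: "\<bar>T\<bar> < 1 / (2 * K n ^ (r - 1))"
    unfolding T_def by (rule tail_sum_small[OF n m])
  have Kpos: "0 < K n ^ (r - 1)" using K_ge_1[of n] by simp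
  show ?thesis
  proof (cases "I = 0")
    case False
    then have "1 \<le> \<bar>real_of_int I\<bar>" by linarith
    moreover have "\<bar>real_of_int I\<bar> = K n ^ (r - 1) * \<bar>X\<bar>"
      unfolding I[symmetric] abs_mult using Kpos by simp
    ultimately have "1 \<le> K n ^ (r - 1) * \<bar>X\<bar>" by simp
    then have "1 / K n ^ (r - 1) \<le> \<bar>X\<bar>" using Kpos by (simp add: field_simps)
    then show ?thesis using T unfolding lform by (simp add: field_simps) linarith
  next
    case True
    then have zero: "\<forall>j\<in>{3..r}. m ! j = 0" using high_coords_zero[OF n m] dvd by simp
    have "X = 0" using I True Kpos by (metis mult_eq_0_iff of_int_0 less_irrefl)
    moreover have "T = of_int (m ! 1) * tail n 1 + of_int (m ! 2) * tail n 2"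
      unfolding T_def sum_1_to_r using zero by simp
    ultimately show ?thesis using zero unfolding lform by simp
  qed
qed

lemma scaled_head_12:
  assumes "j = 1 \<or> j = 2"
  obtains P where "of_int P = K n * head n j" "0 \<le> P" "P \<le> Kseq r n"
proof -
  have "\<exists>y. of_int y = K n * summand k j" if k: "k \<le> n" for k
  proof (cases "k = 0")
    case False
    obtain w where w: "Kseq r n = Kseq r k * w" using Kseq_dvd[OF one_le_r k] by blast
    have "K n * summand k j = of_int (if j = 1 \<longleftrightarrow> even k then digit k * w else 0)"
      using False assms K_ge_1[of k] by (simp add: summand_12 w)
    then show ?thesis by metis
  qed (simp add: summand_def)
  then obtain y where "\<forall>k\<in>{..n}. of_int (y k) = K n * summand k j" by (metis atMost_iff)
  then have "of_int (sum y {..n}) = K n * head n j"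
    unfolding head_def sum_distrib_left of_int_sum by (intro sum.cong) auto
  then obtain Y where P: "of_int Y = K n * head n j" by blast
  have j: "j \<le> r" using assms three_le_r by auto
  have "0 \<le> head n j" unfolding head_def by (intro sum_nonneg summand_nonneg)
  moreover have "head n j \<le> 1"
    using alpha_lt_1[OF j] tail_nonneg[OF j, of n] unfolding tail_def by simp
  ultimately have "0 \<le> real_of_int Y" "real_of_int Y \<le> K n"
    unfolding P using K_ge_1[of n] by (simp_all add: mult_left_le)
  then have "0 \<le> Y" "Y \<le> Kseq r n" by simp_all
  with P show ?thesis by (rule that)
qed

lemma lform_alphas_two_entries:
  assumes "1 \<le> b" "b \<le> r"
  shows "lform alphas (map (\<lambda>i. if i = 0 then P else if i = b then Q else 0) [0..<r + 1])
         = of_int P + of_int Q * alpha b"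
proof -
  have "(\<Sum>j = 1..r. of_int (if j = b then Q else 0) * alpha j)
      = (\<Sum>j = 1..r. if j = b then of_int Q * alpha j else 0)"
    by (intro sum.cong) auto
  also have "\<dots> = of_int Q * alpha b" using assms by simp
  finally show ?thesis
    unfolding lform_alphas by (simp del: upt_Suc)
qed

lemma exists_small_lform:
  assumes n: "2 \<le> n"
  shows "\<exists>p. admissible alphas p \<and> height p \<le> Kseq r (n - 1) \<and>
             \<bar>lform alphas p\<bar> < 1 / (2 * K n ^ (r - 1))"
proof -
  (* alpha_b has no term at level n, so its truncation at level n - 1 is as good as at level n *)
  define b where "b = (if even n then 2 else 1 :: nat)"
  have b: "b = 1 \<or> b = 2" "1 \<le> b" "b \<le> r" using three_le_r unfolding b_def by auto
  have "summand n b = 0" using n unfolding b_def by (auto simp: summand_12)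
  then have tail_n: "tail (n - 1) b = tail n b" using tail_Suc[of "n - 1" b] n by simp
  obtain P where P: "of_int P = K (n - 1) * head (n - 1) b" "0 \<le> P" "P \<le> Kseq r (n - 1)"
    using scaled_head_12[OF b(1)] by blast
  define p where "p = map (\<lambda>i. if i = 0 then - P else if i = b then Kseq r (n - 1) else 0) [0..<r + 1]"
  have "lform alphas p = K (n - 1) * tail n b"
    unfolding p_def lform_alphas_two_entries[OF b(2,3)] using P(1) tail_n
    by (simp add: tail_def algebra_simps)
  then have "\<bar>lform alphas p\<bar> = K (n - 1) * tail n b"
    using tail_nonneg[OF b(3), of n] K_ge_1[of "n - 1"] by simp
  also have "\<dots> \<le> K n * (4 / K (Suc n))"
    using tail_le[OF b(3), of n] tail_nonneg[OF b(3), of n] Kseq_mono[OF one_le_r, of "n - 1" n]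
      K_ge_1[of n] by (intro mult_mono) auto
  also have "\<dots> \<le> real r * (K n * (4 / K (Suc n)))"
    using mult_right_mono[of 1 "real r" "K n * (4 / K (Suc n))"] one_le_r K_ge_1[of n]
      K_ge_1[of "Suc n"] by simp
  also have "\<dots> < 1 / (2 * K n ^ (r - 1))" by (rule K_Suc_bound)
  finally have small: "\<bar>lform alphas p\<bar> < 1 / (2 * K n ^ (r - 1))" .
  have "p \<noteq> []" unfolding p_def by simp
  then have "height p \<le> Kseq r (n - 1)"
    unfolding height_le_iff[OF \<open>p \<noteq> []\<close>] using P(2,3) Kseq_pos[of r "n - 1"]
    by (auto simp: p_def simp del: upt_Suc)
  moreover have "admissible alphas p"
    unfolding admissible_def p_def using b Kseq_pos[of r "n - 1"]
    by (auto simp: list_eq_iff_nth_eq simp del: upt_Suc intro!: exI[of _ b])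
  ultimately show ?thesis using small by blast
qed

lemma best_approx_in_sublattice:
  assumes m: "is_best_approx alphas m" and height: "Kseq r 1 \<le> height m"
  shows "\<forall>j\<in>{3..r}. m ! j = 0"
proof -
  have "height m < Kseq r (nat (height m))"
    using less_Kseq[OF one_le_r, of "nat (height m)"] height Kseq_pos[of r 1] by simp
  moreover have "\<not> height m < Kseq r 0" using height Kseq_pos[of r 1] by simp
  ultimately obtain n where n: "\<not> height m < Kseq r n" "height m < Kseq r (Suc n)"
    using ex_least_nat_less[of "\<lambda>n. height m < Kseq r n"] by auto
  have "1 \<le> n" using n(2) height by (cases n) auto
  then obtain p where p: "admissible alphas p" "height p \<le> Kseq r n"
    and small: "\<bar>lform alphas p\<bar> < 1 / (2 * K (Suc n) ^ (r - 1))"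
    using exists_small_lform[of "Suc n"] by auto
  have "zeta alphas m \<le> zeta alphas p" using is_best_approxD[OF m p(1)] p(2) n(1) by simp
  then have "\<bar>lform alphas m\<bar> < 1 / (2 * K (Suc n) ^ (r - 1))"
    using small unfolding zeta_eq_abs_lform by simp
  moreover have "\<forall>j\<le>r. \<bar>m ! j\<bar> < Kseq r (Suc n)"
    using m n(2) height_nth_le[of _ m] unfolding is_best_approx_def admissible_def
    by (auto intro: le_less_trans)
  ultimately show ?thesis using lform_gap[of "Suc n" m] by auto
qed

lemma K_Suc_Suc_bound: "K n * (4 / K (Suc (Suc n))) < 1 / K (Suc n)"
proof -
  have "Kseq r n \<le> Kseq r (Suc n)" using Kseq_mono[OF one_le_r] by simp
  then have "Kseq r n * Kseq r (Suc n) \<le> Kseq r (Suc n) ^ 2"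
    using Kseq_pos[of r "Suc n"] unfolding power2_eq_square by (intro mult_right_mono) auto
  also have "\<dots> \<le> Kseq r (Suc n) ^ r"
    using Kseq_pos[of r "Suc n"] three_le_r by (intro power_increasing) auto
  also have "8 * \<dots> \<le> Kseq r (Suc (Suc n))"
    unfolding Kseq.simps(2)[of r "Suc n"] using Kseq_pos[of r "Suc n"] by (intro mult_right_mono) auto
  moreover have "1 * 1 \<le> Kseq r n * Kseq r (Suc n)"
    by (rule mult_mono) (use Kseq_pos[of r n] Kseq_pos[of r "Suc n"] in auto)
  ultimately have "4 * (Kseq r n * Kseq r (Suc n)) < Kseq r (Suc (Suc n))" by linarith
  then have "4 * K n * K (Suc n) < K (Suc (Suc n))"
    by (metis mult.assoc of_int_less_iff of_int_mult of_int_numeral)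
  moreover have "x * (4 / z) < 1 / y" if "4 * x * y < z" "0 < y" "0 < z" for x y z :: real
    using that by (simp add: field_simps)
  ultimately show ?thesis using K_ge_1[of "Suc n"] K_ge_1[of "Suc (Suc n)"] by simp
qed

lemma tail_12_independent:
  assumes n: "1 \<le> n" and c: "\<forall>j\<le>r. \<bar>c ! j\<bar> < Kseq r n"
    and eq: "of_int (c ! 1) * tail n 1 + of_int (c ! 2) * tail n 2 = 0"
  shows "c ! (if even n then 2 else 1) = 0"
proof (rule ccontr)
  define a where "a = (if even n then 2 else 1 :: nat)"
  define b where "b = (if even n then 1 else 2 :: nat)"
  (* the tail of alpha_a starts at level n+1 with a term >= 1/K_(n+1), that of alpha_b only at n+2 *)
  assume "c ! (if even n then 2 else 1) \<noteq> 0"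
  then have "1 \<le> \<bar>real_of_int (c ! a)\<bar>" unfolding a_def by linarith
  have ab: "a = 1 \<or> a = 2" "b = 1 \<or> b = 2" "a \<le> r" "b \<le> r"
    using three_le_r unfolding a_def b_def by auto
  have "1 / K (Suc n) \<le> summand (Suc n) a"
    using summand_12[OF ab(1), of "Suc n"] digit_ge_1[of "Suc n"] K_ge_1[of "Suc n"]
    unfolding a_def by (auto simp: divide_right_mono)
  also have "\<dots> \<le> tail n a" using tail_Suc[of n a] tail_nonneg[OF ab(3)] by simp
  finally have "1 / K (Suc n) \<le> \<bar>of_int (c ! a) * tail n a\<bar>"
    using \<open>1 \<le> \<bar>real_of_int (c ! a)\<bar>\<close> tail_nonneg[OF ab(3), of n] unfolding abs_mult
    by (smt (verit) mult_le_cancel_right1)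
  moreover have "\<bar>of_int (c ! b) * tail n b\<bar> \<le> K n * (4 / K (Suc (Suc n)))"
  proof -
    have "summand (Suc n) b = 0" using summand_12[OF ab(2), of "Suc n"] unfolding b_def by auto
    then have "tail n b = tail (Suc n) b" using tail_Suc[of n b] by simp
    moreover have "\<bar>real_of_int (c ! b)\<bar> \<le> K n"
      using c ab(4) by (metis less_imp_le of_int_abs of_int_le_iff)
    ultimately show ?thesis unfolding abs_mult
      using tail_le[OF ab(4), of "Suc n"] tail_nonneg[OF ab(4), of n] by (intro mult_mono) auto
  qed
  moreover have "of_int (c ! a) * tail n a + of_int (c ! b) * tail n b = 0"
    using eq unfolding a_def b_def by (auto simp: add.commute)
  ultimately show False using K_Suc_Suc_bound[of n] by linarith
qed

lemma lform_alphas_eq_0_imp_zero: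
  assumes len: "length c = r + 1" and zero: "lform alphas c = 0"
  shows "\<forall>j\<le>r. c ! j = 0"
proof -
  define n where "n = Suc (nat (height c))"
  have "height c < Kseq r n" using less_Kseq[OF one_le_r, of n] unfolding n_def by linarith
  then have c_n: "\<forall>j\<le>r. \<bar>c ! j\<bar> < Kseq r n" using height_nth_le[of _ c] len
    by (metis le_imp_less_Suc order_le_less_trans Suc_eq_plus1)
  moreover have "Kseq r n \<le> Kseq r (Suc n)" using Kseq_mono[OF one_le_r] by simp
  ultimately have c_Suc_n: "\<forall>j\<le>r. \<bar>c ! j\<bar> < Kseq r (Suc n)" by fastforce
  have pos: "0 < 1 / (2 * K k ^ (r - 1))" for k using K_ge_1[of k] by simp
  have "1 \<le> n" unfolding n_def by simp
  have not_large: "\<not> 1 / (2 * K k ^ (r - 1)) < \<bar>lform alphas c\<bar>" for k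
    unfolding zero abs_zero using pos[of k] by linarith
  have tail_n: "(\<forall>j\<in>{3..r}. c ! j = 0) \<and> of_int (c ! 1) * tail n 1 + of_int (c ! 2) * tail n 2 = 0"
    using lform_gap[OF \<open>1 \<le> n\<close> c_n] not_large[of n] zero by metis
  have tail_Suc_n: "of_int (c ! 1) * tail (Suc n) 1 + of_int (c ! 2) * tail (Suc n) 2 = 0"
    using lform_gap[OF le_SucI[OF \<open>1 \<le> n\<close>] c_Suc_n] not_large[of "Suc n"] zero by metis
  have "c ! 1 = 0" "c ! 2 = 0"
    using tail_12_independent[OF \<open>1 \<le> n\<close> c_n] tail_12_independent[OF _ c_Suc_n tail_Suc_n] tail_n
    by (auto split: if_splits)
  moreover have "c ! 0 = 0" using zero calculation tail_n unfolding lform_alphas sum_1_to_r by simp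
  moreover have "j < 3 \<Longrightarrow> j = 0 \<or> j = 1 \<or> j = 2" for j :: nat by auto
  ultimately show ?thesis using tail_n by (metis atLeastAtMost_iff not_le)
qed

lemma lin_indep_alphas: "lin_indep_1 alphas"
  using lform_alphas_eq_0_imp_zero by (intro lin_indep_1I_int) simp

lemma Delta_eventually_zero:
  assumes ms: "best_approx_seq alphas ms"
  shows "\<exists>\<nu>0. \<forall>\<nu>>\<nu>0. Delta r ms \<nu> = 0"
proof -
  obtain \<nu>0 where \<nu>0: "\<forall>\<nu>>\<nu>0. Kseq r 1 \<le> height (ms \<nu>)"
    using best_approx_seq_height_eventually_ge[OF ms] by blast
  have "Delta r ms \<nu> = 0" if "\<nu> > \<nu>0" for \<nu>
  proof (rule Delta_eq_0_if_zero_column)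
    show "3 \<le> r" by (rule three_le_r)
    fix i
    have "is_best_approx alphas (ms (\<nu> + i))" using ms that unfolding best_approx_seq_def by simp
    then show "ms (\<nu> + i) ! 3 = 0"
      using best_approx_in_sublattice \<nu>0 that three_le_r by simp
  qed
  then show ?thesis by blast
qed

lemma alphas_eq_imp_eq:
  assumes eq: "lacunary_tuple.alphas r \<epsilon>' = alphas"
  shows "\<epsilon>' = \<epsilon>"
proof (rule ccontr)
  interpret other: lacunary_tuple r \<epsilon>' by unfold_locales (rule three_le_r)
  assume "\<epsilon>' \<noteq> \<epsilon>"
  then obtain i where i: "\<epsilon>' i \<noteq> \<epsilon> i" and below: "\<forall>i'<i. \<epsilon>' i' = \<epsilon> i'"
    using exists_least_iff[of "\<lambda>i. \<epsilon>' i \<noteq> \<epsilon> i"] by (auto simp: fun_eq_iff)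
  (* the first differing digit moves alpha_c by 1/K_(i+1), more than all later levels can undo *)
  define c where "c = (if even (Suc i) then 1 else 2 :: nat)"
  have c: "c = 1 \<or> c = 2" "1 \<le> c" "c \<le> r" using three_le_r unfolding c_def by auto
  have "other.head i c = head i c"
    unfolding other.head_def head_def other.summand_def summand_def other.numer_def numer_def
      other.digit_def digit_def
    using below by (intro sum.cong) auto
  moreover have "\<bar>other.summand (Suc i) c - summand (Suc i) c\<bar> = 1 / K (Suc i)"
    using other.summand_12[OF c(1), of "Suc i"] summand_12[OF c(1), of "Suc i"] i K_ge_1[of "Suc i"]
    unfolding c_def other.digit_def digit_def by (cases "\<epsilon>' i") (auto simp: field_simps)
  moreover have "\<bar>other.tail (Suc i) c - tail (Suc i) c\<bar> < 1 / K (Suc i)"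
  proof -
    have "8 * K (Suc i) \<le> K (Suc (Suc i))"
      using Kseq_Suc_ge[OF one_le_r, of "Suc i"] by (metis of_int_le_iff of_int_mult of_int_numeral)
    then have "4 / K (Suc (Suc i)) \<le> 4 / (8 * K (Suc i))"
      using K_ge_1[of "Suc i"] by (intro divide_left_mono) auto
    also have "\<dots> < 1 / K (Suc i)" using K_ge_1[of "Suc i"] by (simp add: field_simps)
    finally show ?thesis
      using other.tail_nonneg[OF c(3), of "Suc i"] tail_nonneg[OF c(3), of "Suc i"]
        other.tail_le[OF c(3), of "Suc i"] tail_le[OF c(3), of "Suc i"] by linarith
  qed
  moreover have "other.alpha c = alpha c"
    using eq other.alphas_nth[OF c(2,3)] alphas_nth[OF c(2,3)] by simp
  ultimately show False
    using other.alpha_split[of c i] alpha_split[of c i] by linarith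
qed

end

lemma uncountable_nat_bool_fun: "uncountable (UNIV :: (nat \<Rightarrow> bool) set)"
proof -
  have "\<not> (\<exists>f :: nat \<Rightarrow> nat \<Rightarrow> bool. range f = UNIV)"
  proof
    assume "\<exists>f :: nat \<Rightarrow> nat \<Rightarrow> bool. range f = UNIV"
    then obtain f :: "nat \<Rightarrow> nat \<Rightarrow> bool" where "range f = UNIV" by blast
    then obtain k where "f k = (\<lambda>n. \<not> f n n)" by (metis UNIV_I imageE)
    then show False by (metis (full_types))
  qed
  then show ?thesis unfolding uncountable_def by simp
qed

lemma inj_alphas: "3 \<le> r \<Longrightarrow> inj (lacunary_tuple.alphas r)"
  by (intro injI) (metis lacunary_tuple.alphas_eq_imp_eq lacunary_tuple.intro)

theorem mainTheorem3:
  fixes r :: nat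
  assumes "r \<ge> 3"
  shows "\<exists>S :: real list set. uncountable S \<and>
           (\<forall>a \<in> S. length a = r \<and> lin_indep_1 a \<and>
              (\<exists>ms. best_approx_seq a ms) \<and>
              (\<forall>ms. best_approx_seq a ms \<longrightarrow>
                 (\<exists>\<nu>0. \<forall>\<nu> > \<nu>0. Delta r ms \<nu> = 0)))"
proof (intro exI[of _ "range (lacunary_tuple.alphas r)"] conjI ballI)
  show "uncountable (range (lacunary_tuple.alphas r))"
    using uncountable_nat_bool_fun countable_image_inj_on inj_alphas[OF assms] by blast
  fix a assume "a \<in> range (lacunary_tuple.alphas r)"
  then obtain \<epsilon> where a: "a = lacunary_tuple.alphas r \<epsilon>" by blast
  interpret lacunary_tuple r \<epsilon> using assms by unfold_locales
  show "length a = r" "lin_indep_1 a" unfolding a by (simp_all add: lin_indep_alphas)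
  show "\<exists>ms. best_approx_seq a ms"
    unfolding a by (rule exists_best_approx_seq[OF lin_indep_alphas alphas_ne_Nil])
  show "\<forall>ms. best_approx_seq a ms \<longrightarrow> (\<exists>\<nu>0. \<forall>\<nu> > \<nu>0. Delta r ms \<nu> = 0)"
    unfolding a using Delta_eventually_zero by blast
qed

end
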